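(* Let $G$ be a group and let $\omega$ be a weight on $G$ which is not strongly non-amenable; let $\mathcal A=l^1(G,\omega)$. Let $\phi:\mathcal B(\mathcal A,c_0(G))\to c_0(G)$ be a bounded left $\mathcal A$-module homomorphism, and let $M\in\mathcal B(\mathcal A,c_0(G))'$ be defined by $\langle M,T\rangle=\langle\delta_{e_G},\phi(T)\rangle$. Then $M$ vanishes on every $T\in\mathcal B(\mathcal A,c_0(G))$ whose matrix $(\langle\delta_s,T(\delta_t)\rangle)_{(s,t)\in G\times G}$ lies in $c_0(G\times G)$.
   Context: Weight: $\omega:G\to(0,\infty)$, $\omega(st)\le\omega(s)\omega(t)$, $\omega(e_G)=1$; $\Omega(g,h)=\omega(gh)\omega(g)^{-1}\omega(h)^{-1}$; $l^1(G,\omega)$ is $l^1(G)$ with $\delta_g\star\delta_h=\Omega(g,h)\delta_{gh}$, dual $l^\infty(G)$ with $\langle f,\delta_g\rangle=f_g$. $c_0(G)$ is a left $\mathcal A$-module via $\langle a\cdot\mu,b\rangle=\mu(ba)$. $\mathcal B(\mathcal A,c_0(G))$ is a left $\mathcal A$-module via $(a\cdot T)(b)=T(ba)$. The weight is strongly non-amenable if for every $\epsilon>0$ the set $\{g:\omega(g)\omega(g^{-1})<\epsilon^{-1}\}$ is finite; so "not strongly non-amenable" means there is $K>0$ with $\{g:\omega(g)\omega(g^{-1})\le K\}$ infinite. *)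

theory Defs
  imports "HOL-Analysis.Analysis"
begin

text \<open>The group G is the (arbitrary, possibly non-abelian) type 'g of class group_add;
  the group product gh is written g + h, the identity e_G is 0, and g^{-1} is - g.
  Scalars are complex.\<close>

definition weight :: "('g::group_add \<Rightarrow> real) \<Rightarrow> bool" where
  "weight \<omega> \<longleftrightarrow> (\<forall>g. 0 < \<omega> g) \<and> (\<forall>s t. \<omega> (s + t) \<le> \<omega> s * \<omega> t) \<and> \<omega> 0 = 1"

definition strongly_non_amenable :: "('g::group_add \<Rightarrow> real) \<Rightarrow> bool" where
  "strongly_non_amenable \<omega> \<longleftrightarrow>
     (\<forall>\<epsilon>::real. \<epsilon> > 0 \<longrightarrow> finite {g. \<omega> g * \<omega> (- g) < inverse \<epsilon>})"

definition Omega :: "('g::group_add \<Rightarrow> real) \<Rightarrow> 'g \<Rightarrow> 'g \<Rightarrow> real" where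
  "Omega \<omega> g h = \<omega> (g + h) / (\<omega> g * \<omega> h)"

definition l1 :: "('g \<Rightarrow> complex) \<Rightarrow> bool" where
  "l1 a \<longleftrightarrow> (\<lambda>g. norm (a g)) summable_on UNIV"

definition l1norm :: "('g \<Rightarrow> complex) \<Rightarrow> real" where
  "l1norm a = (\<Sum>\<^sub>\<infinity>g. norm (a g))"

definition c0 :: "('i \<Rightarrow> complex) \<Rightarrow> bool" where
  "c0 f \<longleftrightarrow> (\<forall>\<epsilon>>0. finite {x. \<epsilon> \<le> norm (f x)})"

definition delta :: "'g \<Rightarrow> 'g \<Rightarrow> complex" where
  "delta g = (\<lambda>h. if h = g then 1 else 0)"

text \<open>Product of l^1(G,omega): delta_g * delta_h = Omega(g,h) delta_{gh}, extended bilinearly.\<close>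
definition conv :: "('g::group_add \<Rightarrow> real) \<Rightarrow> ('g \<Rightarrow> complex) \<Rightarrow> ('g \<Rightarrow> complex) \<Rightarrow> 'g \<Rightarrow> complex" where
  "conv \<omega> a b = (\<lambda>k. \<Sum>\<^sub>\<infinity>g. a g * b (- g + k) * complex_of_real (Omega \<omega> g (- g + k)))"

definition pair :: "('g \<Rightarrow> complex) \<Rightarrow> ('g \<Rightarrow> complex) \<Rightarrow> complex" where
  "pair f b = (\<Sum>\<^sub>\<infinity>g. f g * b g)"

text \<open>Left module action on c_0(G): <a.mu, b> = mu(b a); the element a.mu is
  determined by its values <a.mu, delta_g>.\<close>
definition act_c0 :: "('g::group_add \<Rightarrow> real) \<Rightarrow> ('g \<Rightarrow> complex) \<Rightarrow> ('g \<Rightarrow> complex) \<Rightarrow> 'g \<Rightarrow> complex" where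
  "act_c0 \<omega> a \<mu> = (\<lambda>g. pair \<mu> (conv \<omega> (delta g) a))"

text \<open>B(A, c_0(G)): bounded linear maps from l^1(G) into c_0(G), represented extensionally
  (value 0 outside l^1).\<close>
definition Bop :: "(('g \<Rightarrow> complex) \<Rightarrow> ('g \<Rightarrow> complex)) \<Rightarrow> bool" where
  "Bop T \<longleftrightarrow>
     (\<forall>a. l1 a \<longrightarrow> c0 (T a)) \<and>
     (\<forall>a b. l1 a \<longrightarrow> l1 b \<longrightarrow> T (\<lambda>g. a g + b g) = (\<lambda>g. T a g + T b g)) \<and>
     (\<forall>a c. l1 a \<longrightarrow> T (\<lambda>g. c * a g) = (\<lambda>g. c * T a g)) \<and>
     (\<forall>a. \<not> l1 a \<longrightarrow> T a = (\<lambda>_. 0)) \<and>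
     (\<exists>K. \<forall>a g. l1 a \<longrightarrow> norm (T a g) \<le> K * l1norm a)"

definition opnorm :: "(('g \<Rightarrow> complex) \<Rightarrow> ('g \<Rightarrow> complex)) \<Rightarrow> real" where
  "opnorm T = Sup {norm (T a g) | a g. l1 a \<and> l1norm a \<le> 1}"

definition act_B :: "('g::group_add \<Rightarrow> real) \<Rightarrow> ('g \<Rightarrow> complex) \<Rightarrow>
    (('g \<Rightarrow> complex) \<Rightarrow> ('g \<Rightarrow> complex)) \<Rightarrow> ('g \<Rightarrow> complex) \<Rightarrow> ('g \<Rightarrow> complex)" where
  "act_B \<omega> a T = (\<lambda>b. if l1 b then T (conv \<omega> b a) else (\<lambda>_. 0))"

definition bounded_module_hom ::
  "('g::group_add \<Rightarrow> real) \<Rightarrow> ((('g \<Rightarrow> complex) \<Rightarrow> ('g \<Rightarrow> complex)) \<Rightarrow> ('g \<Rightarrow> complex)) \<Rightarrow> bool" where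
  "bounded_module_hom \<omega> \<phi> \<longleftrightarrow>
     (\<forall>T. Bop T \<longrightarrow> c0 (\<phi> T)) \<and>
     (\<forall>T T'. Bop T \<longrightarrow> Bop T' \<longrightarrow> \<phi> (\<lambda>a g. T a g + T' a g) = (\<lambda>g. \<phi> T g + \<phi> T' g)) \<and>
     (\<forall>T c. Bop T \<longrightarrow> \<phi> (\<lambda>a g. c * T a g) = (\<lambda>g. c * \<phi> T g)) \<and>
     (\<exists>K. \<forall>T g. Bop T \<longrightarrow> norm (\<phi> T g) \<le> K * opnorm T) \<and>
     (\<forall>a T. l1 a \<longrightarrow> Bop T \<longrightarrow> \<phi> (act_B \<omega> a T) = act_c0 \<omega> a (\<phi> T))"

definition Mfun :: "((('g::group_add \<Rightarrow> complex) \<Rightarrow> ('g \<Rightarrow> complex)) \<Rightarrow> ('g \<Rightarrow> complex)) \<Rightarrow>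
    (('g \<Rightarrow> complex) \<Rightarrow> ('g \<Rightarrow> complex)) \<Rightarrow> complex" where
  "Mfun \<phi> T = pair (\<phi> T) (delta 0)"

end

theory Submission
  imports Defs
begin

text \<open>
  Write E_{s,t} for the matrix unit a \<mapsto> a(t) \<delta>_s. Since the matrix of T lies in c_0(G \<times> G),
  T is a finite linear combination of matrix units up to an operator of arbitrarily small norm,
  so it suffices to show \<langle>\<delta>_e, \<phi>(E_{s,t})\<rangle> = 0. For A \<subseteq> G let S_A be the operator
  a \<mapsto> (\<Sum>_{h\<in>A} a(th) / \<Omega>(t,h)) \<delta>_s. Its norm is at most \<omega>(t) \<omega>(t^{-1}) for every A,
  S_A depends additively on A, and \<delta>_h \<cdot> S_{{h}} = E_{s,t}. Hence A \<mapsto> \<phi>(S_A) is a bounded,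
  finitely additive, c_0(G)-valued set function whose diagonal \<phi>(S_{{h}})(h) is the constant
  \<langle>\<delta>_e, \<phi>(E_{s,t})\<rangle>; a gliding hump argument along a sequence of distinct elements of G
  shows that such a diagonal must vanish.
\<close>

section \<open>A gliding hump lemma\<close>

lemma additive_UN_finite:
  fixes m :: "'a set \<Rightarrow> real"
  assumes add: "\<And>A B. A \<inter> B = {} \<Longrightarrow> m (A \<union> B) = m A + m B"
    and "finite I" and "disjoint_family_on X I"
  shows "m (\<Union>i\<in>I. X i) = (\<Sum>i\<in>I. m (X i))"
  using assms(2,3)
proof (induction I rule: finite_induct)
  case empty
  show ?case using add[of "{}" "{}"] by simp
next
  case (insert i I)
  have "X i \<inter> (\<Union>j\<in>I. X j) = {}"
    using insert.hyps(2) insert.prems by (fastforce simp: disjoint_family_on_def)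
  moreover have "disjoint_family_on X I"
    using insert.prems by (auto simp: disjoint_family_on_def)
  ultimately show ?case using insert add by simp
qed

lemma additive_bounded_disjoint_family_card:
  fixes m :: "'a set \<Rightarrow> real" and \<eta> :: real
  assumes add: "\<And>A B. A \<inter> B = {} \<Longrightarrow> m (A \<union> B) = m A + m B"
    and bnd: "\<And>A. \<bar>m A\<bar> \<le> B"
    and I: "finite I" "disjoint_family_on J I"
    and big: "\<And>i. i \<in> I \<Longrightarrow> \<bar>m (J i)\<bar> > \<eta>"
  shows "card I * \<eta> \<le> 2 * B"
proof -
  define Pos where "Pos = {i\<in>I. m (J i) > 0}"
  define Neg where "Neg = {i\<in>I. m (J i) \<le> 0}"
  have fin: "finite Pos" "finite Neg" using I(1) by (auto simp: Pos_def Neg_def)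
  have disj: "disjoint_family_on J Pos" "disjoint_family_on J Neg"
    using I(2) by (auto simp: Pos_def Neg_def disjoint_family_on_def)
  have "card Pos * \<eta> = (\<Sum>i\<in>Pos. \<eta>)" by simp
  also have "\<dots> \<le> (\<Sum>i\<in>Pos. m (J i))"
    by (intro sum_mono) (auto simp: Pos_def dest!: big)
  also have "\<dots> = m (\<Union>i\<in>Pos. J i)" by (rule additive_UN_finite[of m, OF add fin(1) disj(1), symmetric])
  also have "\<dots> \<le> B" using bnd abs_le_D1 by blast
  finally have pos: "card Pos * \<eta> \<le> B" .
  have "card Neg * \<eta> = (\<Sum>i\<in>Neg. \<eta>)" by simp
  also have "\<dots> \<le> (\<Sum>i\<in>Neg. - m (J i))"
    by (intro sum_mono) (auto simp: Neg_def dest!: big)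
  also have "\<dots> = - m (\<Union>i\<in>Neg. J i)"
    by (simp add: additive_UN_finite[of m, OF add fin(2) disj(2)] sum_negf)
  also have "\<dots> \<le> B" using bnd abs_le_D2 by blast
  finally have neg: "card Neg * \<eta> \<le> B" .
  have "card I = card Pos + card Neg"
    using I(1) by (subst card_Un_disjoint[symmetric]) (auto simp: Pos_def Neg_def intro: arg_cong[where f = card])
  then show ?thesis using pos neg by (simp add: distrib_right)
qed

lemma additive_bounded_small_on_infinite_subset:
  fixes m :: "nat set \<Rightarrow> real" and \<eta> :: real
  assumes add: "\<And>A B. A \<inter> B = {} \<Longrightarrow> m (A \<union> B) = m A + m B"
    and bnd: "\<And>A. \<bar>m A\<bar> \<le> B"
    and P: "infinite P" and \<eta>: "\<eta> > 0"
  shows "\<exists>Q\<subseteq>P. infinite Q \<and> (\<forall>J\<subseteq>Q. \<bar>m J\<bar> \<le> \<eta>)"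
proof (rule ccontr)
  assume "\<not> ?thesis"
  then have big: "\<And>Q. Q \<subseteq> P \<Longrightarrow> infinite Q \<Longrightarrow> \<exists>J\<subseteq>Q. \<bar>m J\<bar> > \<eta>"
    by (meson not_le)
  obtain N :: nat where N: "2 * B < N * \<eta>" using ex_less_of_nat_mult[OF \<eta>] by blast
  define e where "e = enumerate P"
  have inj_e: "inj e" unfolding e_def using P strict_mono_enumerate strict_mono_imp_inj_on by blast
  have e_P: "e k \<in> P" for k unfolding e_def using P by (rule enumerate_in_set)
  define Q where "Q i = e ` {k. k mod N = i}" for i
  have Q_inf: "infinite (Q i)" if "i < N" for i
  proof -
    have "infinite {k. k mod N = i}"
    proof (unfold infinite_nat_iff_unbounded_le, intro allI)
      fix l
      have "l \<le> i + N * l" using that by (cases N) auto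
      moreover have "(i + N * l) mod N = i" using that by simp
      ultimately show "\<exists>k\<ge>l. k \<in> {k. k mod N = i}" by blast
    qed
    then show ?thesis unfolding Q_def using inj_e by (auto dest: finite_imageD inj_on_subset)
  qed
  have Q_P: "Q i \<subseteq> P" for i using e_P by (auto simp: Q_def)
  have "\<forall>i\<in>{..<N}. \<exists>J. J \<subseteq> Q i \<and> \<bar>m J\<bar> > \<eta>"
    using big Q_inf Q_P by blast
  then obtain J where J: "\<And>i. i < N \<Longrightarrow> J i \<subseteq> Q i \<and> \<bar>m (J i)\<bar> > \<eta>"
    by (metis lessThan_iff)
  have "disjoint_family_on J {..<N}"
    unfolding disjoint_family_on_def
  proof (intro ballI impI)
    fix i j assume "i \<in> {..<N}" "j \<in> {..<N}" "i \<noteq> j"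
    then have "Q i \<inter> Q j = {}" using inj_e by (auto simp: Q_def inj_def)
    then show "J i \<inter> J j = {}" using J \<open>i \<in> {..<N}\<close> \<open>j \<in> {..<N}\<close> by blast
  qed
  then have "card {..<N} * \<eta> \<le> 2 * B"
    using J by (intro additive_bounded_disjoint_family_card[of m, OF add bnd]) auto
  then show False using N by simp
qed

lemma gliding_hump_construction:
  fixes \<mu> :: "nat \<Rightarrow> nat set \<Rightarrow> real"
  assumes add: "\<And>n A B. A \<inter> B = {} \<Longrightarrow> \<mu> n (A \<union> B) = \<mu> n A + \<mu> n B"
    and bnd: "\<And>n A. \<bar>\<mu> n A\<bar> \<le> B"
    and null: "\<And>A e. e > 0 \<Longrightarrow> finite {n. e \<le> \<bar>\<mu> n A\<bar>}"
    and d: "d > 0"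
  obtains F P :: "nat \<Rightarrow> nat set" and n :: "nat \<Rightarrow> nat"
  where "\<And>k. F k \<inter> P k = {}" "\<And>k. n k \<in> P k" "\<And>k. \<bar>\<mu> (n k) (F k)\<bar> < d"
    and "\<And>k. F (Suc k) = insert (n k) (F k)" "\<And>k. P (Suc k) \<subseteq> P k - {n k}"
    and "\<And>k J. J \<subseteq> P (Suc k) \<Longrightarrow> \<bar>\<mu> (n k) J\<bar> \<le> d"
proof -
  have pick: "\<exists>n\<in>P. \<bar>\<mu> n F\<bar> < d" if "infinite P" for P F
  proof -
    have "infinite (P - {n. d \<le> \<bar>\<mu> n F\<bar>})" using that null[OF d] by simp
    then obtain n where "n \<in> P" "\<not> d \<le> \<bar>\<mu> n F\<bar>" using infinite_imp_nonempty by blast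
    then show ?thesis by (auto simp: not_le)
  qed
  \<comment> \<open>A state (n, F, P): n is the next index, F the indices already chosen, P the remaining pool.\<close>
  define admissible where
    "admissible = (\<lambda>(n, F, P). finite F \<and> infinite P \<and> F \<inter> P = {} \<and> n \<in> P \<and> \<bar>\<mu> n F\<bar> < d)"
  define follows where "follows = (\<lambda>(n, F, P) (n' :: nat, F', P').
    F' = insert n F \<and> P' \<subseteq> P - {n} \<and> (\<forall>J\<subseteq>P'. \<bar>\<mu> n J\<bar> \<le> d))"
  have start: "\<exists>s. admissible s"
  proof -
    obtain n where "\<bar>\<mu> n {}\<bar> < d" using pick[of UNIV "{}"] by auto
    then show ?thesis by (intro exI[of _ "(n, {}, UNIV)"]) (simp add: admissible_def)
  qed
  have step: "\<exists>s'. admissible s' \<and> follows s s'" if "admissible s" for s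
  proof -
    obtain n F P where s: "s = (n, F, P)" by (cases s) auto
    have "infinite (P - {n})" using that by (simp add: s admissible_def)
    from additive_bounded_small_on_infinite_subset[of "\<mu> n" B, OF add bnd this d]
    obtain Q where Q: "Q \<subseteq> P - {n}" "infinite Q" "\<forall>J\<subseteq>Q. \<bar>\<mu> n J\<bar> \<le> d"
      by blast
    obtain n' where "n' \<in> Q" "\<bar>\<mu> n' (insert n F)\<bar> < d" using pick[OF Q(2)] by blast
    then have "admissible (n', insert n F, Q) \<and> follows s (n', insert n F, Q)"
      using that Q by (auto simp: s admissible_def follows_def)
    then show ?thesis by blast
  qed
  obtain f where f: "\<And>k. admissible (f k) \<and> follows (f k) (f (Suc k))"
    using dependent_nat_choice[of "\<lambda>_. admissible" "\<lambda>_. follows"] start step by blast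
  define n where "n k = fst (f k)" for k
  define F where "F k = fst (snd (f k))" for k
  define P where "P k = snd (snd (f k))" for k
  have "F k \<inter> P k = {}" "n k \<in> P k" "\<bar>\<mu> (n k) (F k)\<bar> < d" for k
    using f[of k] by (auto simp: admissible_def n_def F_def P_def split: prod.splits)
  moreover have "F (Suc k) = insert (n k) (F k)" "P (Suc k) \<subseteq> P k - {n k}"
    "\<And>J. J \<subseteq> P (Suc k) \<Longrightarrow> \<bar>\<mu> (n k) J\<bar> \<le> d" for k
    using f[of k] by (auto simp: follows_def n_def F_def P_def split: prod.splits)
  ultimately show ?thesis by (rule that)
qed

lemma gliding_hump_subsequence:
  fixes \<mu> :: "nat \<Rightarrow> nat set \<Rightarrow> real"
  assumes add: "\<And>n A B. A \<inter> B = {} \<Longrightarrow> \<mu> n (A \<union> B) = \<mu> n A + \<mu> n B"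
    and bnd: "\<And>n A. \<bar>\<mu> n A\<bar> \<le> B"
    and null: "\<And>A e. e > 0 \<Longrightarrow> finite {n. e \<le> \<bar>\<mu> n A\<bar>}"
    and d: "d > 0"
  obtains n :: "nat \<Rightarrow> nat" and S where "inj n" "range n \<subseteq> S" "\<And>k. \<bar>\<mu> (n k) (S - {n k})\<bar> \<le> 2 * d"
proof -
  obtain F P :: "nat \<Rightarrow> nat set" and n :: "nat \<Rightarrow> nat"
    where disj: "\<And>k. F k \<inter> P k = {}" and n_P: "\<And>k. n k \<in> P k" and head: "\<And>k. \<bar>\<mu> (n k) (F k)\<bar> < d"
      and F_Suc: "\<And>k. F (Suc k) = insert (n k) (F k)" and P_Suc: "\<And>k. P (Suc k) \<subseteq> P k - {n k}"
      and tail: "\<And>k J. J \<subseteq> P (Suc k) \<Longrightarrow> \<bar>\<mu> (n k) J\<bar> \<le> d"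
    using gliding_hump_construction[of \<mu> B d, OF add bnd null d] by metis
  have mono: "F i \<subseteq> F j \<and> P j \<subseteq> P i \<and> F j \<subseteq> F i \<union> P i" if "i \<le> j" for i j
    using that
  proof (induction j rule: dec_induct)
    case (step j)
    then show ?case using F_Suc[of j] P_Suc[of j] n_P[of j] by auto
  qed simp
  define S where "S = (\<Union>k. F k)"
  have "inj n"
  proof (rule linorder_injI)
    fix i j :: nat assume "i < j"
    then have "n i \<in> F j" using F_Suc[of i] mono[of "Suc i" j] by auto
    then show "n i \<noteq> n j" using disj[of j] n_P[of j] by auto
  qed
  moreover have "range n \<subseteq> S" using F_Suc by (auto simp: S_def)
  moreover have "\<bar>\<mu> (n k) (S - {n k})\<bar> \<le> 2 * d" for k
  proof -
    have "S - F (Suc k) \<subseteq> P (Suc k)"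
    proof
      fix x assume "x \<in> S - F (Suc k)"
      then obtain j where "x \<in> F j" "x \<notin> F (Suc k)" by (auto simp: S_def)
      then show "x \<in> P (Suc k)" using mono[of j "Suc k"] mono[of "Suc k" j] by (cases "j \<le> Suc k") auto
    qed
    moreover have "S - {n k} = F k \<union> (S - F (Suc k))" "F k \<inter> (S - F (Suc k)) = {}"
      using F_Suc[of k] disj[of k] n_P[of k] by (auto simp: S_def)
    then have "\<mu> (n k) (S - {n k}) = \<mu> (n k) (F k) + \<mu> (n k) (S - F (Suc k))" by (simp add: add)
    ultimately show ?thesis using head[of k] tail[of "S - F (Suc k)" k] by linarith
  qed
  ultimately show ?thesis by (rule that)
qed

lemma gliding_hump:
  fixes \<mu> :: "nat \<Rightarrow> nat set \<Rightarrow> real"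
  assumes add: "\<And>n A B. A \<inter> B = {} \<Longrightarrow> \<mu> n (A \<union> B) = \<mu> n A + \<mu> n B"
    and bnd: "\<And>n A. \<bar>\<mu> n A\<bar> \<le> B"
    and null: "\<And>A e. e > 0 \<Longrightarrow> finite {n. e \<le> \<bar>\<mu> n A\<bar>}"
    and diag: "\<And>n. \<mu> n {n} \<ge> \<delta>" and \<delta>: "\<delta> > 0"
  shows False
proof -
  have "\<delta> / 4 > 0" using \<delta> by simp
  obtain n :: "nat \<Rightarrow> nat" and S
    where n: "inj n" "range n \<subseteq> S" and small: "\<And>k. \<bar>\<mu> (n k) (S - {n k})\<bar> \<le> 2 * (\<delta> / 4)"
    using gliding_hump_subsequence[of \<mu> B "\<delta> / 4", OF add bnd null \<open>\<delta> / 4 > 0\<close>] by metis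
  have "\<delta> / 2 \<le> \<bar>\<mu> (n k) S\<bar>" for k
  proof -
    have "\<mu> (n k) ((S - {n k}) \<union> {n k}) = \<mu> (n k) (S - {n k}) + \<mu> (n k) {n k}" by (rule add) blast
    moreover have "(S - {n k}) \<union> {n k} = S" using n(2) by auto
    ultimately have "\<mu> (n k) S = \<mu> (n k) (S - {n k}) + \<mu> (n k) {n k}" by simp
    then show ?thesis using small[of k] diag[of "n k"] by linarith
  qed
  then have "range n \<subseteq> {m. \<delta> / 2 \<le> \<bar>\<mu> m S\<bar>}" by auto
  then have "finite (range n)" using null[of "\<delta> / 2" S] \<delta> finite_subset by auto
  then show False using n(1) finite_imageD by blast
qed

lemma gliding_hump_c0:
  fixes \<nu> :: "'a set \<Rightarrow> 'a \<Rightarrow> complex"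
  assumes "infinite (UNIV :: 'a set)"
    and add: "\<And>A B x. A \<inter> B = {} \<Longrightarrow> \<nu> (A \<union> B) x = \<nu> A x + \<nu> B x"
    and bnd: "\<And>A x. norm (\<nu> A x) \<le> B"
    and null: "\<And>A. c0 (\<nu> A)"
    and diag: "\<And>h. \<nu> {h} h = m"
  shows "m = 0"
proof (rule ccontr)
  assume "m \<noteq> 0"
  obtain gs :: "nat \<Rightarrow> 'a" where gs: "inj gs"
    using infinite_countable_subset[OF assms(1)] by blast
  define \<mu> where "\<mu> n J = Re (\<nu> (gs ` J) (gs n) / m)" for n J
  have norm_\<mu>: "\<bar>\<mu> n J\<bar> \<le> norm (\<nu> (gs ` J) (gs n)) / norm m" for n J
    unfolding \<mu>_def using abs_Re_le_cmod by (metis norm_divide)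
  show False
  proof (rule gliding_hump[of \<mu> "B / norm m" 1])
    fix n and J J' :: "nat set" assume "J \<inter> J' = {}"
    then have "gs ` J \<inter> gs ` J' = {}" using gs by (simp add: image_Int[symmetric])
    then show "\<mu> n (J \<union> J') = \<mu> n J + \<mu> n J'" by (simp add: \<mu>_def image_Un add add_divide_distrib)
  next
    fix n J
    show "\<bar>\<mu> n J\<bar> \<le> B / norm m"
      using norm_\<mu>[of n J] divide_right_mono[OF bnd norm_ge_zero] order_trans by blast
  next
    fix J and e :: real assume "e > 0"
    then have "finite {x. e * norm m \<le> norm (\<nu> (gs ` J) x)}"
      using null \<open>m \<noteq> 0\<close> unfolding c0_def by simp
    then have "finite (gs -` {x. e * norm m \<le> norm (\<nu> (gs ` J) x)})"
      using gs by (rule finite_vimageI)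
    moreover have "e * norm m \<le> norm (\<nu> (gs ` J) (gs n))" if "e \<le> \<bar>\<mu> n J\<bar>" for n
      using order_trans[OF that norm_\<mu>] \<open>m \<noteq> 0\<close> by (simp add: pos_le_divide_eq)
    then have "{n. e \<le> \<bar>\<mu> n J\<bar>} \<subseteq> gs -` {x. e * norm m \<le> norm (\<nu> (gs ` J) x)}" by auto
    ultimately show "finite {n. e \<le> \<bar>\<mu> n J\<bar>}" by (rule finite_subset[rotated])
  next
    show "1 \<le> \<mu> n {n}" for n using \<open>m \<noteq> 0\<close> by (simp add: \<mu>_def diag)
  qed simp
qed

section \<open>The spaces l^1(G) and c_0(G) and bounded operators between them\<close>

lemma l1_iff_summable: "l1 a \<longleftrightarrow> a summable_on UNIV"
  unfolding l1_def using summable_on_iff_abs_summable_on_complex by blast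

lemma l1_add: "l1 a \<Longrightarrow> l1 b \<Longrightarrow> l1 (\<lambda>g. a g + b g)"
  unfolding l1_iff_summable by (rule summable_on_add)

lemma l1_cmult: "l1 a \<Longrightarrow> l1 (\<lambda>g. c * a g)"
  unfolding l1_iff_summable by (rule summable_on_cmult_right)

lemma l1_reindex: "bij f \<Longrightarrow> l1 (\<lambda>x. a (f x)) \<longleftrightarrow> l1 a"
  unfolding l1_def by (rule summable_on_reindex_bij_betw)

lemma l1norm_reindex: "bij f \<Longrightarrow> l1norm (\<lambda>x. a (f x)) = l1norm a"
  unfolding l1norm_def by (rule infsum_reindex_bij_betw)

lemma l1_finite_support:
  assumes "finite S" "\<And>g. g \<notin> S \<Longrightarrow> a g = 0"
  shows "l1 a"
proof -
  have "(\<lambda>g. norm (a g)) summable_on S" using assms(1) by simp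
  then show ?thesis
    unfolding l1_def by (rule summable_on_cong_neutral[THEN iffD1, rotated -1]) (use assms(2) in auto)
qed

lemma l1_zero: "l1 (\<lambda>_. 0)"
  by (rule l1_finite_support[of "{}"]) auto

lemma l1norm_zero: "l1norm (\<lambda>_. 0) = 0"
  unfolding l1norm_def by simp

lemma l1_delta: "l1 (delta h)"
  by (rule l1_finite_support[of "{h}"]) (auto simp: delta_def)

lemma l1norm_nonneg: "0 \<le> l1norm a"
  unfolding l1norm_def by (rule infsum_nonneg) simp

lemma sum_norm_le_l1norm: "l1 a \<Longrightarrow> finite F \<Longrightarrow> (\<Sum>g\<in>F. norm (a g)) \<le> l1norm a"
  unfolding l1_def l1norm_def by (rule finite_sum_le_infsum) auto

lemma norm_le_l1norm: "l1 a \<Longrightarrow> norm (a t) \<le> l1norm a"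
  using sum_norm_le_l1norm[of a "{t}"] by simp

lemma l1norm_tail_small:
  assumes "l1 a" "\<eta> > 0"
  obtains F where "finite F" "l1norm (\<lambda>g. if g \<in> F then 0 else a g) \<le> \<eta>"
proof -
  have sum: "(\<lambda>g. norm (a g)) summable_on UNIV" using assms(1) unfolding l1_def .
  obtain F where F: "finite F" "dist (\<Sum>g\<in>F. norm (a g)) (l1norm a) \<le> \<eta>"
    using infsum_finite_approximation[OF sum assms(2)] unfolding l1norm_def by blast
  have "l1norm (\<lambda>g. if g \<in> F then 0 else a g) = (\<Sum>\<^sub>\<infinity>g\<in>UNIV - F. norm (a g))"
    unfolding l1norm_def by (rule infsum_cong_neutral) auto
  also have "\<dots> = l1norm a - (\<Sum>g\<in>F. norm (a g))"
    unfolding l1norm_def using sum F(1) by (subst infsum_Diff) auto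
  finally show ?thesis using that F by (auto simp: dist_real_def)
qed

lemma infsum_single_point:
  assumes "\<And>g. g \<noteq> h \<Longrightarrow> f g = 0"
  shows "infsum f A = (if h \<in> A then f h else 0)"
proof -
  have "infsum f A = infsum f (A \<inter> {h})"
    by (rule infsum_cong_neutral) (use assms in auto)
  then show ?thesis by (cases "h \<in> A") auto
qed

lemma pair_delta: "pair f (delta h) = f h"
  unfolding pair_def by (subst infsum_single_point[of h]) (auto simp: delta_def)

lemma c0_add:
  assumes "c0 f" "c0 f'"
  shows "c0 (\<lambda>x. f x + f' x)"
  unfolding c0_def
proof (intro allI impI)
  fix e :: real assume "e > 0"
  then have "e / 2 > 0" by simp
  then have "finite ({x. e / 2 \<le> norm (f x)} \<union> {x. e / 2 \<le> norm (f' x)})"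
    using assms unfolding c0_def finite_Un by blast
  moreover have "{x. e \<le> norm (f x + f' x)} \<subseteq> {x. e / 2 \<le> norm (f x)} \<union> {x. e / 2 \<le> norm (f' x)}"
  proof
    fix x assume "x \<in> {x. e \<le> norm (f x + f' x)}"
    then show "x \<in> {x. e / 2 \<le> norm (f x)} \<union> {x. e / 2 \<le> norm (f' x)}"
      using norm_triangle_ineq[of "f x" "f' x"] by auto
  qed
  ultimately show "finite {x. e \<le> norm (f x + f' x)}" by (rule finite_subset[rotated])
qed

lemma c0_cmult:
  assumes "c0 f"
  shows "c0 (\<lambda>x. c * f x)"
proof (cases "c = 0")
  case False
  then have "{x. e \<le> norm (c * f x)} = {x. e / norm c \<le> norm (f x)}" for e
    by (auto simp: norm_mult field_simps)
  then show ?thesis using assms False by (simp add: c0_def)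
qed (simp add: c0_def)

lemma c0_finite_support: "finite S \<Longrightarrow> (\<And>x. x \<notin> S \<Longrightarrow> f x = 0) \<Longrightarrow> c0 f"
  unfolding c0_def by (metis (mono_tags, lifting) finite_subset mem_Collect_eq norm_zero not_le subsetI)

lemma Bop_add_arg: "Bop T \<Longrightarrow> l1 a \<Longrightarrow> l1 b \<Longrightarrow> T (\<lambda>g. a g + b g) = (\<lambda>g. T a g + T b g)"
  unfolding Bop_def by blast

lemma Bop_cmult_arg: "Bop T \<Longrightarrow> l1 a \<Longrightarrow> T (\<lambda>g. c * a g) = (\<lambda>g. c * T a g)"
  unfolding Bop_def by blast

lemma Bop_bounded:
  assumes "Bop T"
  obtains K where "K \<ge> 0" "\<And>a g. l1 a \<Longrightarrow> norm (T a g) \<le> K * l1norm a"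
proof -
  obtain K where K: "\<And>a g. l1 a \<Longrightarrow> norm (T a g) \<le> K * l1norm a"
    using assms unfolding Bop_def by blast
  have "norm (T a g) \<le> max K 0 * l1norm a" if "l1 a" for a g
    using K[OF that, of g] mult_right_mono[OF max.cobounded1 l1norm_nonneg] order_trans by blast
  then show ?thesis using that[of "max K 0"] by simp
qed

lemma Bop_zero: "Bop (\<lambda>_ _. 0)"
  unfolding Bop_def by (auto simp: c0_def intro: exI[of _ 0] l1norm_nonneg)

lemma Bop_add:
  assumes "Bop T" "Bop T'"
  shows "Bop (\<lambda>a g. T a g + T' a g)"
proof -
  obtain K K' where K: "\<And>a g. l1 a \<Longrightarrow> norm (T a g) \<le> K * l1norm a"
    and K': "\<And>a g. l1 a \<Longrightarrow> norm (T' a g) \<le> K' * l1norm a"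
    using Bop_bounded[OF assms(1)] Bop_bounded[OF assms(2)] by metis
  have "norm (T a g + T' a g) \<le> (K + K') * l1norm a" if "l1 a" for a g
    using norm_triangle_ineq[of "T a g" "T' a g"] K[OF that, of g] K'[OF that, of g]
    by (simp add: distrib_right)
  then have "\<exists>K. \<forall>a g. l1 a \<longrightarrow> norm (T a g + T' a g) \<le> K * l1norm a" by blast
  then show ?thesis
    unfolding Bop_def by (intro conjI) (use assms in \<open>auto simp: Bop_def c0_add algebra_simps\<close>)
qed

lemma Bop_cmult:
  assumes "Bop T"
  shows "Bop (\<lambda>a g. c * T a g)"
proof -
  obtain K where K: "\<And>a g. l1 a \<Longrightarrow> norm (T a g) \<le> K * l1norm a"
    using Bop_bounded[OF assms] by metis
  have "norm (c * T a g) \<le> (norm c * K) * l1norm a" if "l1 a" for a g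
    using K[OF that, of g] by (simp add: norm_mult mult.assoc mult_left_mono)
  then have "\<exists>K. \<forall>a g. l1 a \<longrightarrow> norm (c * T a g) \<le> K * l1norm a" by blast
  then show ?thesis
    unfolding Bop_def by (intro conjI) (use assms in \<open>auto simp: Bop_def c0_cmult distrib_left\<close>)
qed

lemma Bop_sum:
  assumes "finite F" "\<And>p. p \<in> F \<Longrightarrow> Bop (E p)"
  shows "Bop (\<lambda>a x. \<Sum>p\<in>F. c p * E p a x)"
  using assms
proof (induction F rule: finite_induct)
  case empty
  show ?case using Bop_zero by simp
next
  case (insert q F)
  then show ?case using Bop_add[OF Bop_cmult[of "E q" "c q"]] by simp
qed

lemma Bop_zero_arg: "Bop T \<Longrightarrow> T (\<lambda>_. 0) = (\<lambda>_. 0)"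
  using Bop_cmult_arg[OF _ l1_zero, of T 0] by simp

lemma opnorm_le:
  assumes "\<And>a g. l1 a \<Longrightarrow> norm (T a g) \<le> C * l1norm a" "C \<ge> 0"
  shows "opnorm T \<le> C"
  unfolding opnorm_def
proof (rule cSup_least)
  have "norm (T (\<lambda>_. 0) g) \<in> {norm (T a g) |a g. l1 a \<and> l1norm a \<le> 1}" for g
    by (intro CollectI exI[of _ "\<lambda>_. 0"] exI[of _ g]) (simp add: l1_zero l1norm_zero)
  then show "{norm (T a g) |a g. l1 a \<and> l1norm a \<le> 1} \<noteq> {}" by blast
next
  fix x assume "x \<in> {norm (T a g) |a g. l1 a \<and> l1norm a \<le> 1}"
  then obtain a g where "x = norm (T a g)" "l1 a" "l1norm a \<le> 1" by blast
  then show "x \<le> C" using assms(1)[of a g] mult_left_le[of "l1norm a" C] assms(2) by simp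
qed

lemma norm_le_opnorm:
  assumes "Bop T" "l1 a" "l1norm a \<le> 1"
  shows "norm (T a g) \<le> opnorm T"
  unfolding opnorm_def
proof (rule cSup_upper)
  show "norm (T a g) \<in> {norm (T a g) |a g. l1 a \<and> l1norm a \<le> 1}" using assms(2,3) by blast
  obtain K where K: "K \<ge> 0" "\<And>a g. l1 a \<Longrightarrow> norm (T a g) \<le> K * l1norm a"
    using Bop_bounded[OF assms(1)] by metis
  show "bdd_above {norm (T a g) |a g. l1 a \<and> l1norm a \<le> 1}"
  proof (rule bdd_aboveI)
    fix x assume "x \<in> {norm (T a g) |a g. l1 a \<and> l1norm a \<le> 1}"
    then obtain a g where "x = norm (T a g)" "l1 a" "l1norm a \<le> 1" by blast
    then show "x \<le> K" using K(2)[of a g] mult_left_le[of "l1norm a" K] K(1) by simp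
  qed
qed

lemma opnorm_nonneg:
  assumes "Bop T"
  shows "0 \<le> opnorm T"
proof -
  have "norm (T (\<lambda>_. 0) undefined) \<le> opnorm T"
    by (rule norm_le_opnorm[OF assms l1_zero]) (simp add: l1norm_zero)
  then show ?thesis by (meson norm_ge_zero order_trans)
qed

lemma Bop_restrict_finite:
  assumes "Bop R" "finite F"
  shows "R (\<lambda>g. if g \<in> F then a g else 0) x = (\<Sum>t\<in>F. a t * R (delta t) x)"
  using assms(2)
proof (induction F rule: finite_induct)
  case empty
  then show ?case using Bop_zero_arg[OF assms(1)] by simp
next
  case (insert t F)
  have split: "(\<lambda>g. if g \<in> insert t F then a g else 0) = (\<lambda>g. a t * delta t g + (if g \<in> F then a g else 0))"
    using insert(2) by (auto simp: delta_def)
  have "l1 (\<lambda>g. if g \<in> F then a g else 0)" by (rule l1_finite_support[OF insert(1)]) auto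
  then show ?case
    unfolding split
    using insert
    by (simp add: Bop_add_arg[OF assms(1) l1_cmult[OF l1_delta]] Bop_cmult_arg[OF assms(1) l1_delta])
qed

lemma Bop_norm_le_of_deltas:
  assumes R: "Bop R" and deltas: "\<And>t. norm (R (delta t) s) \<le> \<epsilon>" and a: "l1 a"
  shows "norm (R a s) \<le> \<epsilon> * l1norm a"
proof (rule field_le_epsilon)
  fix e :: real assume "e > 0"
  obtain K where K: "K \<ge> 0" "\<And>a g. l1 a \<Longrightarrow> norm (R a g) \<le> K * l1norm a"
    using Bop_bounded[OF R] by metis
  obtain F where F: "finite F" "l1norm (\<lambda>g. if g \<in> F then 0 else a g) \<le> e / (K + 1)"
    using l1norm_tail_small[OF a, of "e / (K + 1)"] \<open>e > 0\<close> K(1) by auto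
  define head where "head = (\<lambda>g. if g \<in> F then a g else 0)"
  define tail where "tail = (\<lambda>g. if g \<in> F then 0 else a g)"
  have l1_head: "l1 head" by (rule l1_finite_support[OF F(1)]) (simp add: head_def)
  have "tail = (\<lambda>g. a g + (-1) * head g)" by (auto simp: head_def tail_def)
  with l1_add[OF a l1_cmult[OF l1_head]] have l1_tail: "l1 tail" by presburger
  have "a = (\<lambda>g. head g + tail g)" by (auto simp: head_def tail_def)
  then have "R a = (\<lambda>x. R head x + R tail x)" using Bop_add_arg[OF R l1_head l1_tail] by simp
  then have "norm (R a s) \<le> norm (R head s) + norm (R tail s)" by (simp add: norm_triangle_ineq)
  also have "norm (R head s) \<le> \<epsilon> * l1norm a"
  proof -
    have "norm (R head s) \<le> (\<Sum>t\<in>F. norm (a t) * \<epsilon>)"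
      unfolding head_def Bop_restrict_finite[OF R F(1)]
      by (rule order_trans[OF norm_sum sum_mono]) (simp add: norm_mult deltas mult_left_mono)
    also have "\<dots> \<le> \<epsilon> * l1norm a"
      using sum_norm_le_l1norm[OF a F(1)] order_trans[OF norm_ge_zero deltas]
      by (simp add: sum_distrib_left[symmetric] mult.commute mult_left_mono)
    finally show ?thesis .
  qed
  also have "norm (R tail s) \<le> e"
  proof -
    have "norm (R tail s) \<le> K * (e / (K + 1))"
      using K(2)[OF l1_tail] F(2) K(1) unfolding tail_def by (meson mult_left_mono order_trans)
    also have "\<dots> \<le> e" using \<open>e > 0\<close> K(1) by (simp add: field_simps)
    finally show ?thesis .
  qed
  finally show "norm (R a s) \<le> \<epsilon> * l1norm a + e" by simp
qed

section \<open>Weights and convolution with point masses\<close>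

lemma weight_pos: "weight \<omega> \<Longrightarrow> 0 < \<omega> g"
  unfolding weight_def by blast

lemma weight_subadditive: "weight \<omega> \<Longrightarrow> \<omega> (s + t) \<le> \<omega> s * \<omega> t"
  unfolding weight_def by blast

lemma weight_zero: "weight \<omega> \<Longrightarrow> \<omega> 0 = 1"
  unfolding weight_def by blast

lemma Omega_pos: "weight \<omega> \<Longrightarrow> 0 < Omega \<omega> g h"
  unfolding Omega_def by (simp add: weight_pos)

lemma Omega_le_1: "weight \<omega> \<Longrightarrow> Omega \<omega> g h \<le> 1"
  unfolding Omega_def by (simp add: divide_le_eq_1_pos weight_pos weight_subadditive)

lemma Omega_zero_left: "weight \<omega> \<Longrightarrow> Omega \<omega> 0 h = 1"
  unfolding Omega_def using weight_pos[of \<omega> h] by (simp add: weight_zero)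

lemma inverse_Omega_le:
  assumes w: "weight \<omega>"
  shows "1 / Omega \<omega> t h \<le> \<omega> t * \<omega> (- t)"
proof -
  have pos: "\<omega> t > 0" "\<omega> h > 0" "\<omega> (t + h) > 0" using weight_pos[OF w] by auto
  have "\<omega> h = \<omega> (- t + (t + h))" by (simp add: add.assoc[symmetric])
  also have "\<dots> \<le> \<omega> (- t) * \<omega> (t + h)" using w by (rule weight_subadditive)
  finally have "\<omega> t * \<omega> h / \<omega> (t + h) \<le> \<omega> t * \<omega> (- t)"
    using pos by (simp add: divide_le_eq mult.assoc mult_left_mono)
  then show ?thesis using pos by (simp add: Omega_def)
qed

lemma conv_delta_right: "conv \<omega> b (delta h) k = b (k - h) * Omega \<omega> (k - h) h"
proof -
  have "- g + k = h \<longleftrightarrow> g = k - h" for g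
  proof
    assume "- g + k = h"
    then have "g + (- g + k) = g + h" by simp
    then show "g = k - h" by (simp add: add.assoc[symmetric])
  qed (simp add: minus_diff_eq)
  then show ?thesis
    unfolding conv_def by (subst infsum_single_point[of "k - h"]) (auto simp: delta_def)
qed

lemma l1_conv_delta:
  assumes w: "weight \<omega>" and b: "l1 b"
  shows "l1 (conv \<omega> b (delta h))"
proof -
  have sum: "(\<lambda>k. norm (b (k - h))) summable_on UNIV"
    using l1_reindex[OF bij_diff_right] b unfolding l1_def by blast
  have le: "norm (b (k - h) * Omega \<omega> (k - h) h) \<le> norm (b (k - h))" for k
    using Omega_pos[OF w, of "k - h" h] Omega_le_1[OF w, of "k - h" h]
    by (simp add: norm_mult mult_left_le)
  show ?thesis
    unfolding l1_def conv_delta_right by (rule Infinite_Sum.abs_summable_on_comparison_test'[OF sum le])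
qed

lemma act_c0_delta_at_zero: "weight \<omega> \<Longrightarrow> act_c0 \<omega> (delta h) \<mu> 0 = \<mu> h"
proof -
  assume "weight \<omega>"
  then have "conv \<omega> (delta 0) (delta h) = delta h"
    unfolding fun_eq_iff conv_delta_right by (simp add: delta_def Omega_zero_left)
  then show ?thesis unfolding act_c0_def by (simp add: pair_delta)
qed

section \<open>Matrix units and the operators S_A\<close>

definition rank_one :: "'g \<Rightarrow> (('g \<Rightarrow> complex) \<Rightarrow> complex) \<Rightarrow> ('g \<Rightarrow> complex) \<Rightarrow> 'g \<Rightarrow> complex" where
  "rank_one s f = (\<lambda>a. if l1 a then (\<lambda>x. if x = s then f a else 0) else (\<lambda>_. 0))"

lemma norm_rank_one_le:
  assumes "l1 a" "norm (f a) \<le> C * l1norm a"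
  shows "norm (rank_one s f a x) \<le> C * l1norm a"
  using assms order_trans[OF norm_ge_zero assms(2)] by (simp add: rank_one_def)

lemma Bop_rank_one:
  assumes add: "\<And>a b. l1 a \<Longrightarrow> l1 b \<Longrightarrow> f (\<lambda>g. a g + b g) = f a + f b"
    and cmult: "\<And>a c. l1 a \<Longrightarrow> f (\<lambda>g. c * a g) = c * f a"
    and bound: "\<And>a. l1 a \<Longrightarrow> norm (f a) \<le> C * l1norm a"
  shows "Bop (rank_one s f)"
  unfolding Bop_def
proof (intro conjI allI impI)
  have "norm (rank_one s f a x) \<le> C * l1norm a" if "l1 a" for a x
    by (rule norm_rank_one_le[of a f, OF that bound[OF that]])
  then show "\<exists>K. \<forall>a x. l1 a \<longrightarrow> norm (rank_one s f a x) \<le> K * l1norm a" by blast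
qed (auto simp: rank_one_def add cmult l1_add l1_cmult intro!: c0_finite_support[of "{s}"]
    split: if_splits)

lemma rank_one_cong: "(\<And>a. l1 a \<Longrightarrow> f a = f' a) \<Longrightarrow> rank_one s f = rank_one s f'"
  by (auto simp: rank_one_def fun_eq_iff)

lemma rank_one_add: "rank_one s (\<lambda>a. f a + f' a) = (\<lambda>a x. rank_one s f a x + rank_one s f' a x)"
  by (simp add: rank_one_def fun_eq_iff)

lemma act_B_delta_rank_one:
  assumes "weight \<omega>"
  shows "act_B \<omega> (delta h) (rank_one s f) = rank_one s (\<lambda>b. f (conv \<omega> b (delta h)))"
  using l1_conv_delta[OF assms] by (auto simp: act_B_def rank_one_def)

definition matrix_unit :: "'g \<Rightarrow> 'g \<Rightarrow> ('g \<Rightarrow> complex) \<Rightarrow> 'g \<Rightarrow> complex" where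
  "matrix_unit s t = rank_one s (\<lambda>a. a t)"

lemma Bop_matrix_unit: "Bop (matrix_unit s t)"
  unfolding matrix_unit_def using norm_le_l1norm by (intro Bop_rank_one[where C = 1]) auto

lemma matrix_unit_delta: "matrix_unit s t (delta t') x = (if x = s \<and> t' = t then 1 else 0)"
  unfolding matrix_unit_def rank_one_def using l1_delta[of t'] by (simp add: delta_def)

lemma Bop_matrix_truncation:
  assumes T: "Bop T" and entries: "c0 (\<lambda>(s, t). T (delta t) s)" and "\<epsilon> > 0"
  obtains F c R where "finite F" "Bop R" "opnorm R \<le> \<epsilon>"
    "T = (\<lambda>a x. (\<Sum>p\<in>F. c p * matrix_unit (fst p) (snd p) a x) + R a x)"
proof -
  define F where "F = {p. \<epsilon> \<le> norm (T (delta (snd p)) (fst p))}"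
  have "finite F" using entries \<open>\<epsilon> > 0\<close> unfolding c0_def F_def by (simp add: case_prod_beta)
  define S where "S = (\<lambda>a x. \<Sum>p\<in>F. T (delta (snd p)) (fst p) * matrix_unit (fst p) (snd p) a x)"
  define R where "R = (\<lambda>a x. T a x + (-1) * S a x)"
  have "Bop S" unfolding S_def using \<open>finite F\<close> Bop_matrix_unit by (rule Bop_sum)
  then have "Bop R" unfolding R_def by (intro Bop_add[OF T] Bop_cmult)
  have "norm (R (delta t) s) \<le> \<epsilon>" for s t
  proof -
    have "S (delta t) s = (\<Sum>p\<in>F. if p = (s, t) then T (delta (snd p)) (fst p) else 0)"
      unfolding S_def matrix_unit_delta by (intro sum.cong) auto
    then have "R (delta t) s = (if (s, t) \<in> F then 0 else T (delta t) s)"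
      unfolding R_def using \<open>finite F\<close> by simp
    then show ?thesis using \<open>\<epsilon> > 0\<close> by (simp add: F_def)
  qed
  then have "opnorm R \<le> \<epsilon>"
    using Bop_norm_le_of_deltas[OF \<open>Bop R\<close>] \<open>\<epsilon> > 0\<close> by (intro opnorm_le) auto
  moreover have "T = (\<lambda>a x. S a x + R a x)" by (simp add: R_def)
  ultimately show ?thesis unfolding S_def by (rule that[OF \<open>finite F\<close> \<open>Bop R\<close>])
qed

text \<open>The operator S_A of the introduction is rank_one s (shift_sum \<omega> t A).\<close>

definition shift_sum :: "('g::group_add \<Rightarrow> real) \<Rightarrow> 'g \<Rightarrow> 'g set \<Rightarrow> ('g \<Rightarrow> complex) \<Rightarrow> complex" where
  "shift_sum \<omega> t A a = (\<Sum>\<^sub>\<infinity>h\<in>A. a (t + h) / complex_of_real (Omega \<omega> t h))"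

lemma norm_shift_sum_term_le:
  assumes "weight \<omega>"
  shows "norm (a (t + h) / complex_of_real (Omega \<omega> t h)) \<le> \<omega> t * \<omega> (- t) * norm (a (t + h))"
proof -
  have "norm (a (t + h) / complex_of_real (Omega \<omega> t h)) = norm (a (t + h)) * (1 / Omega \<omega> t h)"
    using Omega_pos[OF assms, of t h] by (simp add: norm_divide)
  also have "\<dots> \<le> norm (a (t + h)) * (\<omega> t * \<omega> (- t))"
    by (rule mult_left_mono[OF inverse_Omega_le[OF assms] norm_ge_zero])
  finally show ?thesis by (simp add: mult.commute)
qed

lemma shift_sum_abs_summable:
  assumes "weight \<omega>" "l1 a"
  shows "(\<lambda>h. norm (a (t + h) / complex_of_real (Omega \<omega> t h))) summable_on A"
proof -
  have "(\<lambda>h. norm (a (t + h))) summable_on UNIV"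
    using l1_reindex[OF bij_plus] assms(2) unfolding l1_def by blast
  then have "(\<lambda>h. \<omega> t * \<omega> (- t) * norm (a (t + h))) summable_on UNIV"
    by (rule summable_on_cmult_right)
  then have "(\<lambda>h. norm (a (t + h) / complex_of_real (Omega \<omega> t h))) summable_on UNIV"
    by (rule Infinite_Sum.abs_summable_on_comparison_test'[OF _ norm_shift_sum_term_le[OF assms(1)]])
  then show ?thesis by (rule summable_on_subset) simp
qed

lemma norm_shift_sum_le:
  assumes "weight \<omega>" "l1 a"
  shows "norm (shift_sum \<omega> t A a) \<le> \<omega> t * \<omega> (- t) * l1norm a"
proof -
  have sum: "(\<lambda>h. norm (a (t + h))) summable_on UNIV"
    using l1_reindex[OF bij_plus] assms(2) unfolding l1_def by blast
  have "norm (shift_sum \<omega> t A a) \<le> (\<Sum>\<^sub>\<infinity>h\<in>A. norm (a (t + h) / complex_of_real (Omega \<omega> t h)))"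
    unfolding shift_sum_def by (rule norm_infsum_bound[OF shift_sum_abs_summable[OF assms]])
  also have "\<dots> \<le> (\<Sum>\<^sub>\<infinity>h. \<omega> t * \<omega> (- t) * norm (a (t + h)))"
    using weight_pos[OF assms(1), of t] weight_pos[OF assms(1), of "- t"]
    by (intro infsum_mono_neutral shift_sum_abs_summable[OF assms] summable_on_cmult_right[OF sum]
        norm_shift_sum_term_le[OF assms(1)]) (auto simp: less_imp_le)
  also have "\<dots> = \<omega> t * \<omega> (- t) * l1norm (\<lambda>h. a (t + h))"
    unfolding l1norm_def by (rule infsum_cmult_right[OF sum])
  finally show ?thesis by (simp add: l1norm_reindex[OF bij_plus])
qed

lemma shift_sum_summable:
  "weight \<omega> \<Longrightarrow> l1 a \<Longrightarrow> (\<lambda>h. a (t + h) / complex_of_real (Omega \<omega> t h)) summable_on A"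
  by (rule abs_summable_summable[OF shift_sum_abs_summable])

lemma shift_sum_add:
  "weight \<omega> \<Longrightarrow> l1 a \<Longrightarrow> l1 b \<Longrightarrow>
    shift_sum \<omega> t A (\<lambda>g. a g + b g) = shift_sum \<omega> t A a + shift_sum \<omega> t A b"
  unfolding shift_sum_def add_divide_distrib by (intro infsum_add shift_sum_summable)

lemma shift_sum_cmult: "weight \<omega> \<Longrightarrow> l1 a \<Longrightarrow> shift_sum \<omega> t A (\<lambda>g. c * a g) = c * shift_sum \<omega> t A a"
  unfolding shift_sum_def times_divide_eq_right[symmetric] by (intro infsum_cmult_right shift_sum_summable)

lemma shift_sum_Un:
  "weight \<omega> \<Longrightarrow> l1 a \<Longrightarrow> A \<inter> B = {} \<Longrightarrow>
    shift_sum \<omega> t (A \<union> B) a = shift_sum \<omega> t A a + shift_sum \<omega> t B a"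
  unfolding shift_sum_def by (intro infsum_Un_disjoint shift_sum_summable)

lemma shift_sum_conv_delta: "weight \<omega> \<Longrightarrow> shift_sum \<omega> t {h} (conv \<omega> b (delta h)) = b t"
  using Omega_pos[of \<omega> t h] by (simp add: shift_sum_def conv_delta_right)

lemma Bop_rank_one_shift_sum: "weight \<omega> \<Longrightarrow> Bop (rank_one s (shift_sum \<omega> t A))"
  by (rule Bop_rank_one[where C = "\<omega> t * \<omega> (- t)"])
    (auto simp: shift_sum_add shift_sum_cmult norm_shift_sum_le)

lemma opnorm_rank_one_shift_sum_le:
  "weight \<omega> \<Longrightarrow> opnorm (rank_one s (shift_sum \<omega> t A)) \<le> \<omega> t * \<omega> (- t)"
  by (intro opnorm_le norm_rank_one_le norm_shift_sum_le) (auto simp: weight_pos less_imp_le)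

section \<open>Bounded module homomorphisms\<close>

lemma bounded_module_hom_c0: "bounded_module_hom \<omega> \<phi> \<Longrightarrow> Bop T \<Longrightarrow> c0 (\<phi> T)"
  unfolding bounded_module_hom_def by blast

lemma bounded_module_hom_add:
  "bounded_module_hom \<omega> \<phi> \<Longrightarrow> Bop T \<Longrightarrow> Bop T' \<Longrightarrow> \<phi> (\<lambda>a g. T a g + T' a g) = (\<lambda>g. \<phi> T g + \<phi> T' g)"
  unfolding bounded_module_hom_def by blast

lemma bounded_module_hom_cmult:
  "bounded_module_hom \<omega> \<phi> \<Longrightarrow> Bop T \<Longrightarrow> \<phi> (\<lambda>a g. c * T a g) = (\<lambda>g. c * \<phi> T g)"
  unfolding bounded_module_hom_def by blast

lemma bounded_module_hom_act:
  "bounded_module_hom \<omega> \<phi> \<Longrightarrow> l1 a \<Longrightarrow> Bop T \<Longrightarrow> \<phi> (act_B \<omega> a T) = act_c0 \<omega> a (\<phi> T)"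
  unfolding bounded_module_hom_def by blast

lemma bounded_module_hom_bounded:
  assumes "bounded_module_hom \<omega> \<phi>"
  obtains K where "K \<ge> 0" "\<And>T g. Bop T \<Longrightarrow> norm (\<phi> T g) \<le> K * opnorm T"
proof -
  obtain K where K: "\<And>T g. Bop T \<Longrightarrow> norm (\<phi> T g) \<le> K * opnorm T"
    using assms unfolding bounded_module_hom_def by blast
  have "norm (\<phi> T g) \<le> max K 0 * opnorm T" if "Bop T" for T g
    using K[OF that, of g] mult_right_mono[OF max.cobounded1 opnorm_nonneg[OF that]] order_trans by blast
  then show ?thesis using that[of "max K 0"] by simp
qed

lemma bounded_module_hom_sum:
  assumes "bounded_module_hom \<omega> \<phi>" "finite F" "\<And>p. p \<in> F \<Longrightarrow> Bop (E p)"
  shows "\<phi> (\<lambda>a x. \<Sum>p\<in>F. c p * E p a x) = (\<lambda>x. \<Sum>p\<in>F. c p * \<phi> (E p) x)"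
  using assms(2,3)
proof (induction F rule: finite_induct)
  case empty
  show ?case using bounded_module_hom_cmult[OF assms(1) Bop_zero, of 0] by simp
next
  case (insert q F)
  then have "Bop (E q)" "Bop (\<lambda>a x. \<Sum>p\<in>F. c p * E p a x)" by (auto intro: Bop_sum)
  then show ?case
    using insert bounded_module_hom_add[OF assms(1) Bop_cmult[OF \<open>Bop (E q)\<close>]]
      bounded_module_hom_cmult[OF assms(1)]
    by simp
qed

lemma bounded_module_hom_matrix_unit_at_zero:
  fixes \<omega> :: "'g::group_add \<Rightarrow> real"
  assumes w: "weight \<omega>" and \<phi>: "bounded_module_hom \<omega> \<phi>" and "infinite (UNIV :: 'g set)"
  shows "\<phi> (matrix_unit s t) 0 = 0"
proof -
  define \<nu> where "\<nu> A = \<phi> (rank_one s (shift_sum \<omega> t A))" for A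
  obtain K where K: "K \<ge> 0" "\<And>T g. Bop T \<Longrightarrow> norm (\<phi> T g) \<le> K * opnorm T"
    using bounded_module_hom_bounded[OF \<phi>] by metis
  have "\<nu> {h} h = \<phi> (matrix_unit s t) 0" for h
  proof -
    have "act_B \<omega> (delta h) (rank_one s (shift_sum \<omega> t {h})) = matrix_unit s t"
      unfolding act_B_delta_rank_one[OF w] matrix_unit_def
      by (rule rank_one_cong) (rule shift_sum_conv_delta[OF w])
    moreover have "\<phi> (act_B \<omega> (delta h) (rank_one s (shift_sum \<omega> t {h}))) = act_c0 \<omega> (delta h) (\<nu> {h})"
      unfolding \<nu>_def by (rule bounded_module_hom_act[OF \<phi> l1_delta Bop_rank_one_shift_sum[OF w]])
    ultimately have "\<phi> (matrix_unit s t) = act_c0 \<omega> (delta h) (\<nu> {h})" by simp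
    then show ?thesis by (simp add: act_c0_delta_at_zero[OF w])
  qed
  then show ?thesis
  proof (rule gliding_hump_c0[OF assms(3), of \<nu>, rotated -1])
    fix A B :: "'g set" and x assume "A \<inter> B = {}"
    then have "rank_one s (shift_sum \<omega> t (A \<union> B))
        = (\<lambda>a x. rank_one s (shift_sum \<omega> t A) a x + rank_one s (shift_sum \<omega> t B) a x)"
      unfolding rank_one_add[symmetric] by (intro rank_one_cong shift_sum_Un[OF w])
    then show "\<nu> (A \<union> B) x = \<nu> A x + \<nu> B x"
      unfolding \<nu>_def
      by (simp add: bounded_module_hom_add[OF \<phi> Bop_rank_one_shift_sum[OF w] Bop_rank_one_shift_sum[OF w]])
  next
    fix A x
    show "norm (\<nu> A x) \<le> K * (\<omega> t * \<omega> (- t))"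
      unfolding \<nu>_def
      using K(2)[OF Bop_rank_one_shift_sum[OF w]] opnorm_rank_one_shift_sum_le[OF w] K(1)
      by (meson mult_left_mono order_trans)
  next
    show "c0 (\<nu> A)" for A
      unfolding \<nu>_def by (rule bounded_module_hom_c0[OF \<phi> Bop_rank_one_shift_sum[OF w]])
  qed
qed

lemma bounded_module_hom_vanishes_on_c0_matrices:
  fixes \<omega> :: "'g::group_add \<Rightarrow> real"
  assumes w: "weight \<omega>" and \<phi>: "bounded_module_hom \<omega> \<phi>" and inf: "infinite (UNIV :: 'g set)"
    and T: "Bop T" and entries: "c0 (\<lambda>(s, t). T (delta t) s)"
  shows "\<phi> T 0 = 0"
proof -
  obtain K where K: "K \<ge> 0" "\<And>T g. Bop T \<Longrightarrow> norm (\<phi> T g) \<le> K * opnorm T"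
    using bounded_module_hom_bounded[OF \<phi>] by metis
  have bound: "norm (\<phi> T 0) \<le> K * \<epsilon>" if \<epsilon>: "\<epsilon> > 0" for \<epsilon>
  proof -
    obtain F c R where F: "finite F" and R: "Bop R" "opnorm R \<le> \<epsilon>"
      and split: "T = (\<lambda>a x. (\<Sum>p\<in>F. c p * matrix_unit (fst p) (snd p) a x) + R a x)"
      by (rule Bop_matrix_truncation[OF T entries \<epsilon>]) (rule that)
    have "\<phi> T = (\<lambda>x. (\<Sum>p\<in>F. c p * \<phi> (matrix_unit (fst p) (snd p)) x) + \<phi> R x)"
      unfolding split bounded_module_hom_add[OF \<phi> Bop_sum[OF F Bop_matrix_unit] R(1)]
      by (simp add: bounded_module_hom_sum[OF \<phi> F Bop_matrix_unit])
    then have "\<phi> T 0 = \<phi> R 0" by (simp add: bounded_module_hom_matrix_unit_at_zero[OF w \<phi> inf])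
    then show ?thesis using K(2)[OF R(1), of 0] mult_left_mono[OF R(2) K(1)] by simp
  qed
  have "norm (\<phi> T 0) \<le> 0"
  proof (rule field_le_epsilon)
    fix e :: real assume "e > 0"
    then have "norm (\<phi> T 0) \<le> K * (e / (K + 1))" using K(1) by (intro bound) simp
    also have "\<dots> \<le> e" using \<open>e > 0\<close> K(1) by (simp add: field_simps)
    finally show "norm (\<phi> T 0) \<le> 0 + e" by simp
  qed
  then show ?thesis by simp
qed

theorem mainTheorem6:
  fixes \<omega> :: "'g::group_add \<Rightarrow> real"
    and \<phi> :: "(('g \<Rightarrow> complex) \<Rightarrow> ('g \<Rightarrow> complex)) \<Rightarrow> ('g \<Rightarrow> complex)"
  assumes "weight \<omega>"
    and "\<not> strongly_non_amenable \<omega>"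
    and "bounded_module_hom \<omega> \<phi>"
    and "Bop T"
    and "c0 (\<lambda>(s, t). T (delta t) s)"
  shows "Mfun \<phi> T = 0"
proof -
  obtain \<epsilon> :: real where "infinite {g. \<omega> g * \<omega> (- g) < inverse \<epsilon>}"
    using assms(2) unfolding strongly_non_amenable_def by blast
  then have "infinite (UNIV :: 'g set)" by (rule infinite_super[OF subset_UNIV])
  then show ?thesis
    unfolding Mfun_def pair_delta
    by (rule bounded_module_hom_vanishes_on_c0_matrices[OF assms(1,3) _ assms(4,5)])
qed

end
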